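(* There is a constant $c$ such that, running the (modified) Ghaffari process described in the context with fully independent marking for $c\log\Delta$ phases, with high probability the number of edges of $G$ incident to nodes that have not made their decision (i.e., are neither in the independent set nor adjacent to a node in it) is $O(n)$.
   Context: Let $G=(V,E)$ be an undirected graph with $n$ nodes and maximum degree $\Delta$. The process runs in phases $t=0,1,2,\dots$ on the graph induced by the undecided nodes (initially all nodes). Each undecided node $v$ has a value $p_t(v)$, with $p_0(v)=1/4$; its effective degree is $d_t(v)=\sum_{u\in N(v)}p_t(u)$, the sum over its undecided neighbors. Then $p_{t+1}(v)=p_t(v)/2$ if $d_t(v)\ge 1/2$, and $p_{t+1}(v)=\min\{2p_t(v),1/4\}$ if $d_t(v)<1/2$. In phase $t$, each undecided node $v$ becomes marked with probability $p_t(v)$, independently of all other nodes; a marked node none of whose undecided neighbors is marked joins the independent set, and it and all its neighbors become decided (are removed). "With high probability" means with probability at least $1-1/n$. *)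

theory Defs
  imports "HOL-Probability.Probability"
begin

definition simple_graph :: "'a set \<Rightarrow> 'a set set \<Rightarrow> bool" where
  "simple_graph V E \<longleftrightarrow> finite V \<and> (\<forall>e\<in>E. e \<subseteq> V \<and> card e = 2)"

definition nbrs :: "'a set set \<Rightarrow> 'a \<Rightarrow> 'a set" where
  "nbrs E v = {u. {u, v} \<in> E}"

definition max_degree :: "'a set \<Rightarrow> 'a set set \<Rightarrow> nat" where
  "max_degree V E = Max ((\<lambda>v. card (nbrs E v)) ` V)"

text \<open>State of the process: the set of undecided nodes and the values p_t.\<close>
type_synonym 'a gstate = "'a set \<times> ('a \<Rightarrow> real)"

definition eff_deg :: "'a set set \<Rightarrow> 'a gstate \<Rightarrow> 'a \<Rightarrow> real" where
  "eff_deg E s v = (\<Sum>u \<in> nbrs E v \<inter> fst s. snd s u)"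

definition joiners :: "'a set set \<Rightarrow> 'a set \<Rightarrow> ('a \<Rightarrow> bool) \<Rightarrow> 'a set" where
  "joiners E U m = {v \<in> U. m v \<and> (\<forall>u \<in> nbrs E v \<inter> U. \<not> m u)}"

definition new_p :: "'a set set \<Rightarrow> 'a gstate \<Rightarrow> 'a \<Rightarrow> real" where
  "new_p E s v = (if eff_deg E s v \<ge> 1/2 then snd s v / 2 else min (2 * snd s v) (1/4))"

definition phase :: "'a set set \<Rightarrow> 'a gstate \<Rightarrow> 'a gstate pmf" where
  "phase E s =
     map_pmf (\<lambda>m. let I = joiners E (fst s) m in
                  (fst s - I - (\<Union>v\<in>I. nbrs E v), new_p E s))
       (Pi_pmf (fst s) False (\<lambda>v. bernoulli_pmf (snd s v)))"

fun run :: "'a set \<Rightarrow> 'a set set \<Rightarrow> nat \<Rightarrow> 'a gstate pmf" where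
  "run V E 0 = return_pmf (V, \<lambda>_. 1/4)"
| "run V E (Suc k) = bind_pmf (run V E k) (phase E)"

definition undecided_edges :: "'a set set \<Rightarrow> 'a gstate \<Rightarrow> nat" where
  "undecided_edges E s = card {e \<in> E. e \<inter> fst s \<noteq> {}}"

end

theory Submission
  imports Defs
begin

text \<open>
  Call a phase golden for \<open>v\<close> if \<open>p(v) = 1/4\<close> and \<open>d(v) < 1/2\<close>, or if \<open>d(v) \<ge> 1/8\<close> and a
  tenth of \<open>d(v)\<close> comes from neighbours of effective degree below \<open>1/2\<close>; in a golden phase \<open>v\<close>
  is decided with probability at least \<open>1/400\<close>. The potential
  \<open>F\<^sub>t(v) = 2\<^sup>t / (4 p\<^sub>t(v)) \<cdot> max(d\<^sub>t(v), 1/4)\<^sup>4\<close> grows by a factor of at most \<open>64\<close> in a golden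
  phase and not at all in any other phase. For a set \<open>S\<close> of nodes whose 2-balls are pairwise
  disjoint, the survival events of the nodes of \<open>S\<close> in one phase are independent, so the product
  of \<open>F\<^sub>t(v)\<^sup>\<theta>\<close> over the surviving \<open>v \<in> S\<close> is a supermartingale for small \<open>\<theta>\<close>. As
  \<open>F\<^sub>0 \<le> (\<Delta>/4)\<^sup>4\<close> and \<open>F\<^sub>T \<ge> 2\<^sup>T/256\<close>, Markov's inequality shows that all of \<open>S\<close> is still
  undecided after \<open>T \<ge> 70000 ln \<Delta>\<close> phases with probability at most \<open>\<Delta>\<^bsup>-13|S|\<^esup>\<close>.

  If more than \<open>9n\<close> edges touch undecided nodes, more than \<open>9n/\<Delta>\<close> nodes are undecided, and a
  greedy choice finds \<open>\<lceil>n/\<Delta>\<^sup>5\<rceil>\<close> of them with pairwise disjoint 2-balls. A union bound over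
  the at most \<open>n choose \<lceil>n/\<Delta>\<^sup>5\<rceil>\<close> candidate sets bounds the failure probability by \<open>1/n\<close>.
\<close>

section \<open>Independence in product measures\<close>

definition determined_by :: "'a set \<Rightarrow> ('a \<Rightarrow> 'b) set \<Rightarrow> bool" where
  "determined_by J X \<longleftrightarrow> (\<forall>m m'. (\<forall>i\<in>J. m i = m' i) \<longrightarrow> (m \<in> X \<longleftrightarrow> m' \<in> X))"

lemma determined_byD:
  "determined_by J X \<Longrightarrow> (\<And>i. i \<in> J \<Longrightarrow> m i = m' i) \<Longrightarrow> m \<in> X \<longleftrightarrow> m' \<in> X"
  unfolding determined_by_def by blast

lemma determined_by_mono: "determined_by J X \<Longrightarrow> J \<subseteq> J' \<Longrightarrow> determined_by J' X"
  unfolding determined_by_def by blast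

lemma determined_by_INT:
  "(\<And>k. k \<in> K \<Longrightarrow> determined_by J (X k)) \<Longrightarrow> determined_by J (\<Inter>k\<in>K. X k)"
  unfolding determined_by_def by blast

lemma measure_pair_pmf_times:
  "measure_pmf.prob (pair_pmf A B) (X \<times> Y) = measure_pmf.prob A X * measure_pmf.prob B Y"
proof -
  have "emeasure (pair_pmf A B) (X \<times> Y) = (\<integral>\<^sup>+x. indicator (X \<times> Y) x \<partial>pair_pmf A B)"
    by simp
  also have "\<dots> = (\<integral>\<^sup>+a. \<integral>\<^sup>+b. indicator X a * indicator Y b \<partial>B \<partial>A)"
    by (simp add: nn_integral_pair_pmf' indicator_times)
  also have "\<dots> = (\<integral>\<^sup>+a. indicator X a * emeasure B Y \<partial>A)"
    by (simp add: nn_integral_cmult)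
  also have "\<dots> = emeasure A X * emeasure B Y"
    by (simp add: nn_integral_multc)
  finally show ?thesis
    by (simp add: measure_pmf.emeasure_eq_measure ennreal_mult[symmetric])
qed

lemma measure_Pi_pmf_determined:
  assumes "finite A" "A' \<subseteq> A" "J \<subseteq> A'" and X: "determined_by J X"
  shows "measure_pmf.prob (Pi_pmf A' d p) X = measure_pmf.prob (Pi_pmf A d p) X"
proof -
  have "Pi_pmf A' d p = map_pmf (\<lambda>f x. if x \<in> A' then f x else d) (Pi_pmf A d p)"
    using assms by (intro Pi_pmf_subset) auto
  moreover have "(\<lambda>f x. if x \<in> A' then f x else d) -` X = X"
  proof (intro set_eqI)
    fix f :: "'a \<Rightarrow> 'b"
    have "(\<lambda>x. if x \<in> A' then f x else d) \<in> X \<longleftrightarrow> f \<in> X"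
      by (rule determined_byD[OF X]) (use assms(3) in auto)
    then show "f \<in> (\<lambda>f x. if x \<in> A' then f x else d) -` X \<longleftrightarrow> f \<in> X" by simp
  qed
  ultimately show ?thesis by simp
qed

lemma measure_Pi_pmf_Int_determined:
  fixes X Y :: "('a \<Rightarrow> 'b) set"
  assumes A: "finite A" "B \<subseteq> A"
    and X: "determined_by B X" and Y: "determined_by (A - B) Y"
  shows "measure_pmf.prob (Pi_pmf A d p) (X \<inter> Y) =
           measure_pmf.prob (Pi_pmf A d p) X * measure_pmf.prob (Pi_pmf A d p) Y"
proof -
  define glue :: "('a \<Rightarrow> 'b) \<times> ('a \<Rightarrow> 'b) \<Rightarrow> 'a \<Rightarrow> 'b"
    where "glue = (\<lambda>(f, g) x. if x \<in> B then f x else g x)"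
  have "Pi_pmf A d p = Pi_pmf (B \<union> (A - B)) d p"
    using A by (simp add: Un_absorb1)
  also have "\<dots> = map_pmf glue (pair_pmf (Pi_pmf B d p) (Pi_pmf (A - B) d p))"
    unfolding glue_def using A by (intro Pi_pmf_union) (auto intro: finite_subset)
  finally have split: "Pi_pmf A d p = \<dots>" .
  have "glue (f, g) \<in> X \<longleftrightarrow> f \<in> X" for f g
    by (rule determined_byD[OF X]) (simp add: glue_def)
  moreover have "glue (f, g) \<in> Y \<longleftrightarrow> g \<in> Y" for f g
    by (rule determined_byD[OF Y]) (simp add: glue_def)
  ultimately have "glue -` (X \<inter> Y) = X \<times> Y" by auto
  then have "measure_pmf.prob (Pi_pmf A d p) (X \<inter> Y) =
      measure_pmf.prob (Pi_pmf B d p) X * measure_pmf.prob (Pi_pmf (A - B) d p) Y"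
    by (simp add: split measure_pair_pmf_times)
  also have "measure_pmf.prob (Pi_pmf B d p) X = measure_pmf.prob (Pi_pmf A d p) X"
    using A X by (intro measure_Pi_pmf_determined) auto
  also have "measure_pmf.prob (Pi_pmf (A - B) d p) Y = measure_pmf.prob (Pi_pmf A d p) Y"
    using A Y by (intro measure_Pi_pmf_determined) auto
  finally show ?thesis .
qed

lemma measure_Pi_pmf_INT_determined:
  assumes "finite A" "finite K" "\<And>k. k \<in> K \<Longrightarrow> B k \<subseteq> A" "disjoint_family_on B K"
    and "\<And>k. k \<in> K \<Longrightarrow> determined_by (B k) (X k)"
  shows "measure_pmf.prob (Pi_pmf A d p) (\<Inter>k\<in>K. X k) =
           (\<Prod>k\<in>K. measure_pmf.prob (Pi_pmf A d p) (X k))"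
  using assms(2-)
proof (induction K rule: finite_induct)
  case (insert k0 K)
  have rest: "determined_by (A - B k0) (X k)" if "k \<in> K" for k
  proof (rule determined_by_mono)
    show "determined_by (B k) (X k)" using that insert.prems(3) by blast
    have "B k \<inter> B k0 = {}"
      using that insert.hyps(2) by (intro disjoint_family_onD[OF insert.prems(2)]) auto
    then show "B k \<subseteq> A - B k0" using that insert.prems(1) by blast
  qed
  have "measure_pmf.prob (Pi_pmf A d p) (X k0 \<inter> (\<Inter>k\<in>K. X k)) =
      measure_pmf.prob (Pi_pmf A d p) (X k0) * measure_pmf.prob (Pi_pmf A d p) (\<Inter>k\<in>K. X k)"
  proof (rule measure_Pi_pmf_Int_determined[OF assms(1)])
    show "B k0 \<subseteq> A" "determined_by (B k0) (X k0)" using insert.prems(1,3) by simp_all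
  qed (rule determined_by_INT[OF rest])
  also have "measure_pmf.prob (Pi_pmf A d p) (\<Inter>k\<in>K. X k) = (\<Prod>k\<in>K. measure_pmf.prob (Pi_pmf A d p) (X k))"
    using insert.prems by (intro insert.IH) (auto intro: disjoint_family_on_mono)
  finally show ?case using insert.hyps by simp
qed simp

lemma one_minus_sum_le_prod_one_minus:
  fixes x :: "'a \<Rightarrow> real"
  assumes "finite W" "\<And>w. w \<in> W \<Longrightarrow> 0 \<le> x w \<and> x w \<le> 1"
  shows "1 - sum x W \<le> (\<Prod>w\<in>W. 1 - x w)"
  using assms
proof (induction W rule: finite_induct)
  case (insert a W)
  have IH: "1 - sum x W \<le> (\<Prod>w\<in>W. 1 - x w)" using insert by auto
  have "0 \<le> sum x W" using insert.prems by (intro sum_nonneg) auto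
  moreover have "0 \<le> x a" "x a \<le> 1" using insert.prems by auto
  ultimately have "1 - sum x W - x a \<le> (1 - x a) * (1 - sum x W)"
    by (simp add: algebra_simps)
  also have "\<dots> \<le> (1 - x a) * (\<Prod>w\<in>W. 1 - x w)"
    using IH \<open>x a \<le> 1\<close> by (intro mult_left_mono) auto
  finally show ?case using insert.hyps by (simp add: algebra_simps)
qed simp

lemma exists_subset_sum_between:
  fixes x :: "'a \<Rightarrow> real"
  assumes "finite L" "\<And>u. u \<in> L \<Longrightarrow> 0 \<le> x u \<and> x u \<le> b" "a \<le> sum x L" "0 < a"
  shows "\<exists>L'\<subseteq>L. a \<le> sum x L' \<and> sum x L' < a + b"
  using assms
proof (induction L rule: finite_induct)
  case (insert u L)
  show ?case
  proof (cases "a \<le> sum x L")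
    case True
    then show ?thesis using insert by (metis insert_iff subset_insertI2)
  next
    case False
    then show ?thesis
      using insert.prems(1)[of u] insert.prems(2) insert.hyps by (intro exI[of _ "insert u L"]) auto
  qed
qed simp

lemma measure_Pi_bernoulli_one_marked:
  assumes fin: "finite U" and v: "v \<in> U" and W: "W \<subseteq> U" "v \<notin> W"
    and p: "\<And>u. 0 \<le> p u \<and> p u \<le> 1"
  shows "measure_pmf.prob (Pi_pmf U False (\<lambda>u. bernoulli_pmf (p u))) {m. m v \<and> (\<forall>w\<in>W. \<not> m w)}
           = p v * (\<Prod>w\<in>W. 1 - p w)"
proof -
  define q where "q x = (if x = v then p v else if x \<in> W then 1 - p x else 1)" for x
  define Bs where "Bs x = (if x = v then {True} else if x \<in> W then {False} else UNIV)" for x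
  have "{m. m v \<and> (\<forall>w\<in>W. \<not> m w)} = Pi U Bs"
    using v W by (auto simp: Bs_def Pi_def)
  moreover have "measure_pmf.prob (bernoulli_pmf (p x)) (Bs x) = q x" for x
    using p[of x] by (auto simp: Bs_def q_def measure_pmf_single)
  ultimately have "measure_pmf.prob (Pi_pmf U False (\<lambda>u. bernoulli_pmf (p u))) {m. m v \<and> (\<forall>w\<in>W. \<not> m w)}
      = (\<Prod>x\<in>U. q x)"
    by (simp add: measure_Pi_pmf_Pi[OF fin])
  also have "\<dots> = q v * (\<Prod>x\<in>U - {v}. q x)"
    using fin v by (simp add: prod.remove)
  also have "(\<Prod>x\<in>U - {v}. q x) = (\<Prod>x\<in>W. q x)"
    using fin W by (intro prod.mono_neutral_right) (auto simp: q_def)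
  also have "(\<Prod>x\<in>W. q x) = (\<Prod>w\<in>W. 1 - p w)"
    using W by (intro prod.cong) (auto simp: q_def)
  finally show ?thesis by (simp add: q_def)
qed

lemma measure_Pi_bernoulli_one_marked_ge:
  assumes fin: "finite U" and v: "v \<in> U" and W: "W \<subseteq> U" "v \<notin> W"
    and p: "\<And>u. 0 \<le> p u \<and> p u \<le> 1"
  shows "p v * (1 - sum p W)
           \<le> measure_pmf.prob (Pi_pmf U False (\<lambda>u. bernoulli_pmf (p u))) {m. m v \<and> (\<forall>w\<in>W. \<not> m w)}"
proof -
  have "1 - sum p W \<le> (\<Prod>w\<in>W. 1 - p w)"
    using finite_subset[OF W(1) fin] p by (intro one_minus_sum_le_prod_one_minus) auto
  then have "p v * (1 - sum p W) \<le> p v * (\<Prod>w\<in>W. 1 - p w)"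
    using p by (intro mult_left_mono) auto
  then show ?thesis by (simp only: measure_Pi_bernoulli_one_marked[OF assms])
qed

section \<open>Graphs and a single phase\<close>

lemma nbrs_sym: "u \<in> nbrs E v \<longleftrightarrow> v \<in> nbrs E u"
  by (simp add: nbrs_def insert_commute)

context
  fixes V :: "'a set" and E :: "'a set set"
  assumes graph: "simple_graph V E"
begin

lemma finite_vertices: "finite V"
  using graph by (simp add: simple_graph_def)

lemma nbrs_subset: "nbrs E v \<subseteq> V"
  using graph unfolding simple_graph_def nbrs_def by auto

lemma finite_nbrs: "finite (nbrs E v)"
  using nbrs_subset finite_vertices by (rule finite_subset)

lemma nbrs_irrefl: "v \<notin> nbrs E v"
  using graph unfolding simple_graph_def nbrs_def by force

lemma card_nbrs_le_max_degree: "card (nbrs E v) \<le> max_degree V E"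
proof (cases "v \<in> V")
  case True
  then show ?thesis
    unfolding max_degree_def using finite_vertices by (intro Max_ge) auto
next
  case False
  then have "nbrs E v = {}" using graph unfolding simple_graph_def nbrs_def by auto
  then show ?thesis by simp
qed

end

definition undecided_after :: "'a set set \<Rightarrow> 'a set \<Rightarrow> ('a \<Rightarrow> bool) \<Rightarrow> 'a set" where
  "undecided_after E U m = U - joiners E U m - (\<Union>v\<in>joiners E U m. nbrs E v)"

abbreviation marking :: "'a gstate \<Rightarrow> ('a \<Rightarrow> bool) pmf" where
  "marking s \<equiv> Pi_pmf (fst s) False (\<lambda>v. bernoulli_pmf (snd s v))"

lemma phase_eq: "phase E s = map_pmf (\<lambda>m. (undecided_after E (fst s) m, new_p E s)) (marking s)"
  by (simp add: phase_def undecided_after_def Let_def)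

lemma undecided_after_subset: "undecided_after E U m \<subseteq> U"
  by (auto simp: undecided_after_def)

lemma undecided_after_iff:
  "v \<in> undecided_after E U m \<longleftrightarrow>
     v \<in> U \<and> v \<notin> joiners E U m \<and> (\<forall>u\<in>nbrs E v. u \<notin> joiners E U m)"
  unfolding undecided_after_def by (auto simp: nbrs_sym)

definition ball2 :: "'a set set \<Rightarrow> 'a \<Rightarrow> 'a set" where
  "ball2 E v = insert v (nbrs E v \<union> (\<Union>u\<in>nbrs E v. nbrs E u))"

lemma determined_undecided_after:
  "determined_by (ball2 E v \<inter> U) {m. v \<in> undecided_after E U m}"
proof (unfold determined_by_def, intro allI impI)
  fix m m' :: "'a \<Rightarrow> bool" assume agree: "\<forall>i\<in>ball2 E v \<inter> U. m i = m' i"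
  have "x \<in> joiners E U m \<longleftrightarrow> x \<in> joiners E U m'" if "x \<in> insert v (nbrs E v)" for x
    using that agree unfolding joiners_def ball2_def by auto
  then show "m \<in> {m. v \<in> undecided_after E U m} \<longleftrightarrow> m' \<in> {m. v \<in> undecided_after E U m}"
    unfolding undecided_after_iff by auto
qed

lemma finite_set_pmf_marking: "finite (fst s) \<Longrightarrow> finite (set_pmf (marking s))"
proof -
  assume fin: "finite (fst s)"
  have "set_pmf (marking s) \<subseteq> PiE_dflt (fst s) False (\<lambda>_. UNIV)"
    using set_Pi_pmf_subset'[OF fin, of False "\<lambda>v. bernoulli_pmf (snd s v)"] by (auto simp: PiE_dflt_def)
  moreover have "finite (PiE_dflt (fst s) False (\<lambda>_. UNIV :: bool set))"
    using fin by (intro finite_PiE_dflt) auto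
  ultimately show ?thesis by (rule finite_subset)
qed

lemma finite_set_pmf_phase: "finite (fst s) \<Longrightarrow> finite (set_pmf (phase E s))"
  unfolding phase_eq by (simp add: finite_set_pmf_marking)

lemma set_pmf_phase: "s' \<in> set_pmf (phase E s) \<Longrightarrow> fst s' \<subseteq> fst s \<and> snd s' = new_p E s"
  unfolding phase_eq by (auto simp: undecided_after_def)

text \<open>All values \<open>p\<^sub>t(v)\<close> are of this form; this is used only to see that
  \<open>p\<^sub>t(v) < 1/4\<close> forces \<open>p\<^sub>t(v) \<le> 1/8\<close>.\<close>
definition dyadic :: "real \<Rightarrow> bool" where
  "dyadic x \<longleftrightarrow> (\<exists>j::nat. 2 \<le> j \<and> x = 1 / 2 ^ j)"

lemma dyadic_bounds: "dyadic x \<Longrightarrow> 0 < x \<and> x \<le> 1/4"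
proof -
  assume "dyadic x"
  then obtain j :: nat where j: "2 \<le> j" "x = 1 / 2 ^ j" by (auto simp: dyadic_def)
  have "1 / (2::real) ^ j \<le> 1 / 2 ^ 2" using j by (intro divide_left_mono power_increasing) auto
  then show ?thesis using j by simp
qed

lemma dyadic_unit_interval: "dyadic x \<Longrightarrow> 0 \<le> x \<and> x \<le> 1"
  using dyadic_bounds[of x] by simp

lemma dyadic_le_eighth: "dyadic x \<Longrightarrow> x \<noteq> 1/4 \<Longrightarrow> x \<le> 1/8"
proof -
  assume "dyadic x" "x \<noteq> 1/4"
  then obtain j :: nat where j: "2 \<le> j" "x = 1 / 2 ^ j" by (auto simp: dyadic_def)
  then have "j \<noteq> 2" using \<open>x \<noteq> 1/4\<close> by auto
  have "1 / (2::real) ^ j \<le> 1 / 2 ^ 3" using j \<open>j \<noteq> 2\<close> by (intro divide_left_mono power_increasing) auto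
  then show ?thesis using j by simp
qed

lemma dyadic_new_p: "dyadic (snd s v) \<Longrightarrow> dyadic (new_p E s v)"
proof -
  assume "dyadic (snd s v)"
  then obtain j :: nat where j: "2 \<le> j" "snd s v = 1 / 2 ^ j" by (auto simp: dyadic_def)
  consider "1/2 \<le> eff_deg E s v" | "eff_deg E s v < 1/2" "j = 2"
    | i where "eff_deg E s v < 1/2" "j = Suc i" "2 \<le> i"
    using j by (metis Suc_le_D le_antisym not_le not_less_eq_eq)
  then show ?thesis
  proof cases
    case 1
    then show ?thesis using j unfolding dyadic_def new_p_def by (intro exI[of _ "Suc j"]) auto
  next
    case 2
    then show ?thesis using j unfolding dyadic_def new_p_def by (intro exI[of _ 2]) auto
  next
    case (3 i)
    have "1 / (2::real) ^ i \<le> 1 / 2 ^ 2" using 3 by (intro divide_left_mono power_increasing) auto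
    then show ?thesis using 3 j unfolding dyadic_def new_p_def by (intro exI[of _ i]) auto
  qed
qed

definition valid_state :: "'a set \<Rightarrow> 'a gstate \<Rightarrow> bool" where
  "valid_state V s \<longleftrightarrow> fst s \<subseteq> V \<and> (\<forall>v. dyadic (snd s v))"

lemma valid_state_run: "s \<in> set_pmf (run V E k) \<Longrightarrow> valid_state V s"
proof (induction k arbitrary: s)
  case 0
  then show ?case by (auto simp: valid_state_def dyadic_def intro!: exI[of _ 2])
next
  case (Suc k)
  then obtain s0 where s0: "s0 \<in> set_pmf (run V E k)" "s \<in> set_pmf (phase E s0)" by auto
  then show ?case
    using Suc.IH[OF s0(1)] set_pmf_phase[OF s0(2)] dyadic_new_p[of s0] by (auto simp: valid_state_def)
qed

section \<open>The potential and golden phases\<close>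

definition eff_deg_floor :: "'a set set \<Rightarrow> 'a gstate \<Rightarrow> 'a \<Rightarrow> real" where
  "eff_deg_floor E s v = max (eff_deg E s v) (1/4)"

definition potential :: "'a set set \<Rightarrow> nat \<Rightarrow> 'a gstate \<Rightarrow> 'a \<Rightarrow> real" where
  "potential E t s v = 2 ^ t / (4 * snd s v) * eff_deg_floor E s v ^ 4"

definition light_mass :: "'a set set \<Rightarrow> 'a gstate \<Rightarrow> 'a \<Rightarrow> real" where
  "light_mass E s v = (\<Sum>u\<in>{u\<in>nbrs E v \<inter> fst s. eff_deg E s u < 1/2}. snd s u)"

definition golden :: "'a set set \<Rightarrow> 'a gstate \<Rightarrow> 'a \<Rightarrow> bool" where
  "golden E s v \<longleftrightarrow> (snd s v = 1/4 \<and> eff_deg E s v < 1/2) \<or>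
                     (1/8 \<le> eff_deg E s v \<and> eff_deg E s v / 10 \<le> light_mass E s v)"

lemma potential_factor_bound:
  fixes p p' d dl d' :: real
  assumes p: "0 < p" "p \<le> 1/4" "p \<noteq> 1/4 \<Longrightarrow> p \<le> 1/8"
    and p': "p' = (if 1/2 \<le> d then p/2 else min (2*p) (1/4))"
    and dl: "0 \<le> dl" "dl \<le> d" and d': "0 \<le> d'" "2*d' \<le> d + 3*dl"
  shows "2*p/p' * (max d' (1/4))^4 \<le>
     (if (p = 1/4 \<and> d < 1/2) \<or> (1/8 \<le> d \<and> d/10 \<le> dl) then 64 else 1) * (max d (1/4))^4"
proof (cases "(p = 1/4 \<and> d < 1/2) \<or> (1/8 \<le> d \<and> d/10 \<le> dl)")
  case True
  have pp: "p/2 \<le> p'" "0 < p'" using p p' by auto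
  have "max d' (1/4) \<le> 2 * max d (1/4)" using d' dl by (auto simp: max_def)
  then have "(max d' (1/4))^4 \<le> (2 * max d (1/4))^4" by (intro power_mono) auto
  then have "(max d' (1/4))^4 \<le> 16 * (max d (1/4))^4" by (simp add: power_mult_distrib)
  moreover have "2*p/p' \<le> 4" using pp p by (simp add: field_simps)
  ultimately have "2*p/p' * (max d' (1/4))^4 \<le> 4 * (16 * (max d (1/4))^4)"
    using pp p by (intro mult_mono) auto
  then show ?thesis using True by simp
next
  case not_golden: False
  show ?thesis
  proof (cases "1/2 \<le> d")
    case True
    then have "d' \<le> 13/20 * d" using not_golden d' by auto
    then have "max d' (1/4) \<le> 13/20 * max d (1/4)" using True by (auto simp: max_def)
    then have "(max d' (1/4))^4 \<le> (13/20 * max d (1/4))^4" by (intro power_mono) auto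
    then have "(max d' (1/4))^4 \<le> (13/20)^4 * (max d (1/4))^4" by (simp only: power_mult_distrib)
    moreover have "2*p/p' = 4" using True p p' by auto
    ultimately have "2*p/p' * (max d' (1/4))^4 \<le> (4 * (13/20)^4) * (max d (1/4))^4" by simp
    also have "\<dots> \<le> 1 * (max d (1/4))^4" by (intro mult_right_mono) (auto simp: power4_eq_xxxx)
    finally show ?thesis by (simp only: if_not_P[OF not_golden])
  next
    case False
    then have "p \<le> 1/8" using not_golden p by auto
    then have "2*p/p' = 1" using False p p' by auto
    moreover have "max d' (1/4) \<le> max d (1/4)"
    proof (cases "d < 1/8")
      case True
      then show ?thesis using d' dl by (auto simp: max_def)
    next
      case False
      then show ?thesis using not_golden d' by (auto simp: max_def)
    qed
    then have "(max d' (1/4))^4 \<le> (max d (1/4))^4" by (intro power_mono) auto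
    ultimately have "2*p/p' * (max d' (1/4))^4 \<le> 1 * (max d (1/4))^4" by simp
    then show ?thesis by (simp only: if_not_P[OF not_golden])
  qed
qed

context
  fixes V :: "'a set" and E :: "'a set set"
  assumes graph: "simple_graph V E"
begin

lemma eff_deg_phase_bound:
  assumes dy: "\<And>u. dyadic (snd s u)" and U': "U' \<subseteq> fst s"
  shows "2 * eff_deg E (U', new_p E s) v \<le> eff_deg E s v + 3 * light_mass E s v"
proof -
  define N where "N = nbrs E v \<inter> fst s"
  define L where "L = {u\<in>N. eff_deg E s u < 1/2}"
  have fN: "finite N" using finite_nbrs[OF graph] by (auto simp: N_def)
  have LN: "L \<subseteq> N" by (auto simp: L_def)
  have "eff_deg E (U', new_p E s) v = (\<Sum>u\<in>nbrs E v \<inter> U'. new_p E s u)"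
    by (simp add: eff_deg_def)
  also have "\<dots> \<le> (\<Sum>u\<in>N. new_p E s u)"
    using U' fN dyadic_unit_interval[OF dyadic_new_p[OF dy]] by (intro sum_mono2) (auto simp: N_def)
  also have "\<dots> = (\<Sum>u\<in>L. new_p E s u) + (\<Sum>u\<in>N - L. new_p E s u)"
    using fN LN by (simp add: sum.subset_diff)
  also have "\<dots> \<le> (\<Sum>u\<in>L. 2 * snd s u) + (\<Sum>u\<in>N - L. snd s u / 2)"
    by (intro add_mono sum_mono) (auto simp: L_def new_p_def)
  also have "\<dots> = 2 * sum (snd s) L + (sum (snd s) N - sum (snd s) L) / 2"
    using fN LN by (simp add: sum_distrib_left sum_divide_distrib[symmetric] sum_diff)
  finally show ?thesis
    by (simp add: eff_deg_def light_mass_def N_def L_def[unfolded N_def] field_simps)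
qed

lemma light_mass_bounds: "(\<And>u. 0 \<le> snd s u) \<Longrightarrow> 0 \<le> light_mass E s v \<and> light_mass E s v \<le> eff_deg E s v"
  unfolding light_mass_def eff_deg_def using finite_nbrs[OF graph]
  by (auto intro: sum_nonneg sum_mono2)

lemma potential_phase_bound:
  assumes dy: "\<And>u. dyadic (snd s u)" and U': "U' \<subseteq> fst s"
  shows "potential E (Suc t) (U', new_p E s) v \<le> (if golden E s v then 64 else 1) * potential E t s v"
proof -
  let ?p = "snd s v" and ?p' = "new_p E s v" and ?d = "eff_deg E s v"
  let ?d' = "eff_deg E (U', new_p E s) v"
  have p: "0 < ?p" "?p \<le> 1/4" using dyadic_bounds[OF dy] by auto
  have p': "0 < ?p'" using dyadic_bounds[OF dyadic_new_p[OF dy]] by auto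
  have nonneg: "0 \<le> snd s u" "0 \<le> new_p E s u" for u
    using dyadic_unit_interval[OF dy] dyadic_unit_interval[OF dyadic_new_p[OF dy]] by auto
  have "2*?p/?p' * (max ?d' (1/4))^4 \<le> (if golden E s v then 64 else 1) * (max ?d (1/4))^4"
    unfolding golden_def
  proof (rule potential_factor_bound[OF p dyadic_le_eighth[OF dy]])
    show "?p' = (if 1/2 \<le> ?d then ?p/2 else min (2*?p) (1/4))" by (simp add: new_p_def)
    show "0 \<le> ?d'" unfolding eff_deg_def using nonneg by (intro sum_nonneg) auto
    show "2 * ?d' \<le> ?d + 3 * light_mass E s v" by (rule eff_deg_phase_bound[OF dy U'])
  qed (use light_mass_bounds[of s v] nonneg in auto)
  then have "2^t / (4 * ?p) * (2*?p/?p' * (max ?d' (1/4))^4)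
      \<le> 2^t / (4 * ?p) * ((if golden E s v then 64 else 1) * (max ?d (1/4))^4)"
    using p by (intro mult_left_mono) auto
  then show ?thesis
    using p p' by (simp add: potential_def eff_deg_floor_def field_simps)
qed

lemma prob_decided_if_light_top:
  assumes fin: "finite (fst s)" and dy: "\<And>u. dyadic (snd s u)" and v: "v \<in> fst s"
    and top: "snd s v = 1/4" and light: "eff_deg E s v < 1/2"
  shows "1/8 \<le> measure_pmf.prob (marking s) {m. v \<notin> undecided_after E (fst s) m}"
proof -
  let ?W = "nbrs E v \<inter> fst s"
  have "1/8 \<le> snd s v * (1 - sum (snd s) ?W)" using light by (simp add: top eff_deg_def)
  also have "\<dots> \<le> measure_pmf.prob (marking s) {m. m v \<and> (\<forall>w\<in>?W. \<not> m w)}"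
    using nbrs_irrefl[OF graph, of v] dyadic_unit_interval[OF dy]
    by (intro measure_Pi_bernoulli_one_marked_ge fin v) auto
  also have "\<dots> \<le> measure_pmf.prob (marking s) {m. v \<notin> undecided_after E (fst s) m}"
    using v by (intro measure_pmf.finite_measure_mono) (auto simp: undecided_after_def joiners_def)
  finally show ?thesis .
qed

text \<open>Choose light neighbours \<open>L'\<close> of total mass in \<open>[1/80, 1/80 + 1/4)\<close>; the events
  ``\<open>u\<close> is the only marked node among \<open>N(u) \<union> L'\<close>'' for \<open>u \<in> L'\<close> are disjoint, each has
  probability at least \<open>p(u)/5\<close>, and each makes \<open>v\<close> decided.\<close>
lemma prob_decided_if_light_mass:
  assumes fin: "finite (fst s)" and dy: "\<And>u. dyadic (snd s u)" and v: "v \<in> fst s"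
    and mass: "1/80 \<le> light_mass E s v"
  shows "1/400 \<le> measure_pmf.prob (marking s) {m. v \<notin> undecided_after E (fst s) m}"
proof -
  let ?U = "fst s" and ?p = "snd s"
  let ?M = "measure_pmf.prob (marking s)"
  have p: "0 \<le> ?p u \<and> ?p u \<le> 1" "?p u \<le> 1/4" for u
    using dyadic_unit_interval[OF dy] dyadic_bounds[OF dy] by auto
  define L where "L = {u\<in>nbrs E v \<inter> ?U. eff_deg E s u < 1/2}"
  have fL: "finite L" using finite_nbrs[OF graph] by (auto simp: L_def)
  obtain L' where L': "L' \<subseteq> L" "1/80 \<le> sum ?p L'" "sum ?p L' < 1/80 + 1/4"
    using exists_subset_sum_between[OF fL, of ?p "1/4" "1/80"] mass p by (auto simp: light_mass_def L_def)
  have fL': "finite L'" using fL L'(1) by (rule finite_subset[rotated])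
  define W where "W u = (nbrs E u \<inter> ?U \<union> L') - {u}" for u
  define A where "A u = {m. m u \<and> (\<forall>w\<in>W u. \<not> m w)}" for u
  have A_decides: "(\<Union>u\<in>L'. A u) \<subseteq> {m. v \<notin> undecided_after E ?U m}"
  proof
    fix m assume "m \<in> (\<Union>u\<in>L'. A u)"
    then obtain u where u: "u \<in> L'" "m u" "\<forall>w\<in>W u. \<not> m w" by (auto simp: A_def)
    then have "u \<in> nbrs E v" "u \<in> joiners E ?U m"
      using L'(1) nbrs_irrefl[OF graph, of u] by (auto simp: L_def joiners_def W_def)
    then show "m \<in> {m. v \<notin> undecided_after E ?U m}" by (auto simp: undecided_after_iff nbrs_sym)
  qed
  have A_prob: "?p u / 5 \<le> ?M (A u)" if u: "u \<in> L'" for u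
  proof -
    have uL: "u \<in> ?U" "eff_deg E s u < 1/2" using u L'(1) by (auto simp: L_def)
    have "sum ?p (W u) \<le> sum ?p (nbrs E u \<inter> ?U \<union> L')"
      using finite_nbrs[OF graph] fL' p by (intro sum_mono2) (auto simp: W_def)
    also have "\<dots> \<le> sum ?p (nbrs E u \<inter> ?U) + sum ?p L'"
      using finite_nbrs[OF graph] fL' p by (simp add: sum_Un sum_nonneg)
    also have "\<dots> < 1/2 + (1/80 + 1/4)" using uL L' by (simp add: eff_deg_def)
    finally have "?p u * (1/5) \<le> ?p u * (1 - sum ?p (W u))"
      using p[of u] by (intro mult_left_mono) auto
    also have "\<dots> \<le> ?M (A u)"
      unfolding A_def using uL L'(1) p
      by (intro measure_Pi_bernoulli_one_marked_ge fin) (auto simp: W_def L_def)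
    finally show ?thesis by simp
  qed
  have "1/400 \<le> (\<Sum>u\<in>L'. ?p u / 5)" using L'(2) by (simp add: sum_divide_distrib[symmetric])
  also have "\<dots> \<le> (\<Sum>u\<in>L'. ?M (A u))" using A_prob by (intro sum_mono)
  also have "\<dots> = ?M (\<Union>u\<in>L'. A u)"
    using fL' by (intro measure_pmf.finite_measure_finite_Union[symmetric])
      (auto simp: disjoint_family_on_def A_def W_def)
  also have "\<dots> \<le> ?M {m. v \<notin> undecided_after E ?U m}"
    using A_decides by (intro measure_pmf.finite_measure_mono) auto
  finally show ?thesis .
qed

lemma prob_decided_if_golden:
  assumes "finite (fst s)" "\<And>u. dyadic (snd s u)" "v \<in> fst s" "golden E s v"
  shows "1/400 \<le> measure_pmf.prob (marking s) {m. v \<notin> undecided_after E (fst s) m}"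
  using assms prob_decided_if_light_top[OF assms(1-3)] prob_decided_if_light_mass[OF assms(1-3)]
  unfolding golden_def by fastforce

end

section \<open>A supermartingale for far-apart nodes\<close>

text \<open>A golden phase may multiply the potential by \<open>64\<close>, but leaves the node undecided with
  probability at most \<open>399/400\<close>; \<open>\<theta>\<close> is chosen so that \<open>64\<^sup>\<theta> \<cdot> 399/400 \<le> 1\<close>.\<close>
definition theta :: real where
  "theta = 1/2394"

lemma golden_factor_powr_theta: "64 powr theta * (399/400) \<le> (1::real)"
proof -
  have "1 + real 399 * (1/399) \<le> (1 + 1/399::real) ^ 399"
    by (rule Bernoulli_inequality) simp
  then have "(2::real) ^ 6 \<le> ((400/399) ^ 399) ^ 6" by (intro power_mono) auto
  then have "(64::real) \<le> (400/399) ^ 2394" by (simp add: power_mult[symmetric])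
  then have "64 powr theta \<le> ((400/399) ^ 2394) powr theta"
    by (intro powr_mono2) (auto simp: theta_def)
  also have "((400/399::real) ^ 2394) powr theta = 400/399"
  proof -
    have "(400/399::real) ^ 2394 = (400/399) powr (real 2394)" by (rule powr_realpow[symmetric]) simp
    then have "((400/399::real) ^ 2394) powr theta = (400/399) powr (real 2394 * theta)"
      by (simp only: powr_powr)
    then show ?thesis by (simp add: theta_def)
  qed
  finally show ?thesis by simp
qed

definition weight :: "'a set set \<Rightarrow> nat \<Rightarrow> 'a set \<Rightarrow> 'a gstate \<Rightarrow> real" where
  "weight E t S s = (\<Prod>v\<in>S. if v \<in> fst s then potential E t s v powr theta else 0)"

definition far_apart :: "'a set set \<Rightarrow> 'a set \<Rightarrow> bool" where
  "far_apart E S \<longleftrightarrow> (\<forall>u\<in>S. \<forall>w\<in>S. u \<noteq> w \<longrightarrow> ball2 E u \<inter> ball2 E w = {})"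

lemma potential_nonneg: "(\<And>u. dyadic (snd s u)) \<Longrightarrow> 0 \<le> potential E t s v"
  using dyadic_unit_interval unfolding potential_def eff_deg_floor_def by auto

lemma weight_nonneg: "0 \<le> weight E t S s"
  unfolding weight_def by (intro prod_nonneg) auto

lemma potential_lower_bound:
  assumes "dyadic (snd s v)"
  shows "2 ^ t / 256 \<le> potential E t s v"
proof -
  have p: "0 < snd s v" "snd s v \<le> 1/4" using dyadic_bounds[OF assms] by auto
  have "(2::real) ^ t * (1/4) ^ 4 \<le> 2 ^ t / (4 * snd s v) * eff_deg_floor E s v ^ 4"
    using p by (intro mult_mono power_mono) (auto simp: le_divide_eq eff_deg_floor_def)
  then show ?thesis by (simp add: potential_def power4_eq_xxxx)
qed

lemma weight_ge_if_undecided: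
  assumes dy: "\<And>u. dyadic (snd s u)" and S: "S \<subseteq> fst s"
  shows "((2 ^ t / 256) powr theta) ^ card S \<le> weight E t S s"
proof -
  have "(\<Prod>v\<in>S. (2 ^ t / 256) powr theta) \<le> weight E t S s"
    unfolding weight_def using S potential_lower_bound[OF dy]
    by (intro prod_mono) (auto intro: powr_mono2 simp: theta_def)
  then show ?thesis by simp
qed

context
  fixes V :: "'a set" and E :: "'a set set"
  assumes graph: "simple_graph V E"
begin

abbreviation golden_factor :: "'a gstate \<Rightarrow> 'a \<Rightarrow> real" where
  "golden_factor s v \<equiv> if golden E s v then 64 else 1"

lemma weight_phase_le:
  assumes dy: "\<And>u. dyadic (snd s u)" and "finite S"
  shows "weight E (Suc t) S (undecided_after E (fst s) m, new_p E s) \<le>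
     (\<Prod>v\<in>S. (golden_factor s v * potential E t s v) powr theta) *
       indicator (\<Inter>v\<in>S. {m. v \<in> undecided_after E (fst s) m}) m"
proof (cases "\<forall>v\<in>S. v \<in> undecided_after E (fst s) m")
  case True
  have "weight E (Suc t) S (undecided_after E (fst s) m, new_p E s) =
      (\<Prod>v\<in>S. potential E (Suc t) (undecided_after E (fst s) m, new_p E s) v powr theta)"
    unfolding weight_def using True by (intro prod.cong) auto
  also have "\<dots> \<le> (\<Prod>v\<in>S. (golden_factor s v * potential E t s v) powr theta)"
  proof (rule prod_mono)
    fix v
    have "potential E (Suc t) (undecided_after E (fst s) m, new_p E s) v \<le> golden_factor s v * potential E t s v"
      by (rule potential_phase_bound[OF graph dy undecided_after_subset])
    then show "0 \<le> potential E (Suc t) (undecided_after E (fst s) m, new_p E s) v powr theta \<and>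
        potential E (Suc t) (undecided_after E (fst s) m, new_p E s) v powr theta
          \<le> (golden_factor s v * potential E t s v) powr theta"
      using potential_nonneg[of "(undecided_after E (fst s) m, new_p E s)"] dyadic_new_p[OF dy]
      by (auto intro!: powr_mono2 simp: theta_def)
  qed
  finally show ?thesis using True by simp
next
  case False
  then have "weight E (Suc t) S (undecided_after E (fst s) m, new_p E s) = 0"
    unfolding weight_def using assms(2) by (intro prod_zero) auto
  then show ?thesis using False by simp
qed

lemma survival_factor_le:
  assumes fin: "finite (fst s)" and dy: "\<And>u. dyadic (snd s u)"
  shows "(golden_factor s v * potential E t s v) powr theta *
           measure_pmf.prob (marking s) {m. v \<in> undecided_after E (fst s) m}
         \<le> (if v \<in> fst s then potential E t s v powr theta else 0)"
proof (cases "v \<in> fst s")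
  case False
  then have "{m. v \<in> undecided_after E (fst s) m} = {}" by (auto simp: undecided_after_def)
  then show ?thesis using False by simp
next
  case v: True
  let ?P = "measure_pmf.prob (marking s) {m. v \<in> undecided_after E (fst s) m}"
  have "(golden_factor s v * potential E t s v) powr theta * ?P \<le> potential E t s v powr theta"
  proof (cases "golden E s v")
    case True
    have "?P = 1 - measure_pmf.prob (marking s) {m. v \<notin> undecided_after E (fst s) m}"
      by (subst measure_pmf.prob_compl[symmetric]) (auto intro: arg_cong[where f = "measure_pmf.prob _"])
    also have "\<dots> \<le> 399/400" using prob_decided_if_golden[OF graph fin dy v True] by simp
    finally have "64 powr theta * ?P \<le> 64 powr theta * (399/400)" by (intro mult_left_mono) auto
    also have "\<dots> \<le> 1" by (rule golden_factor_powr_theta)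
    finally have "potential E t s v powr theta * (64 powr theta * ?P) \<le> potential E t s v powr theta"
      by (simp add: mult_left_le)
    then show ?thesis
      using True potential_nonneg[OF dy] by (simp add: powr_mult mult_ac)
  next
    case False
    then show ?thesis by (simp add: mult_left_le)
  qed
  then show ?thesis using v by simp
qed

lemma expectation_weight_phase_le:
  assumes valid: "valid_state V s" and fS: "finite S" and far: "far_apart E S"
  shows "measure_pmf.expectation (phase E s) (weight E (Suc t) S) \<le> weight E t S s"
proof -
  let ?U = "fst s" and ?M = "marking s"
  let ?Surv = "\<lambda>v. {m. v \<in> undecided_after E ?U m}"
  have fU: "finite ?U" using valid finite_vertices[OF graph] by (auto simp: valid_state_def intro: finite_subset)
  have dy: "\<And>u. dyadic (snd s u)" using valid by (simp add: valid_state_def)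
  have fM: "finite (set_pmf ?M)" by (rule finite_set_pmf_marking[OF fU])
  define c where "c = (\<Prod>v\<in>S. (golden_factor s v * potential E t s v) powr theta)"
  have "measure_pmf.expectation (phase E s) (weight E (Suc t) S) =
        measure_pmf.expectation ?M (\<lambda>m. weight E (Suc t) S (undecided_after E ?U m, new_p E s))"
    unfolding phase_eq by simp
  also have "\<dots> \<le> measure_pmf.expectation ?M (\<lambda>m. c * indicator (\<Inter>v\<in>S. ?Surv v) m)"
    unfolding c_def using weight_phase_le[OF dy fS]
    by (intro integral_mono integrable_measure_pmf_finite[OF fM])
  also have "\<dots> = c * measure_pmf.prob ?M (\<Inter>v\<in>S. ?Surv v)" by simp
  also have "measure_pmf.prob ?M (\<Inter>v\<in>S. ?Surv v) = (\<Prod>v\<in>S. measure_pmf.prob ?M (?Surv v))"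
    using far determined_undecided_after
    by (intro measure_Pi_pmf_INT_determined[OF fU fS, where B = "\<lambda>v. ball2 E v \<inter> ?U"])
      (auto simp: far_apart_def disjoint_family_on_def)
  also have "c * (\<Prod>v\<in>S. measure_pmf.prob ?M (?Surv v)) =
      (\<Prod>v\<in>S. (golden_factor s v * potential E t s v) powr theta * measure_pmf.prob ?M (?Surv v))"
    unfolding c_def by (simp add: prod.distrib)
  also have "\<dots> \<le> weight E t S s"
    unfolding weight_def using survival_factor_le[OF fU dy] by (intro prod_mono) auto
  finally show ?thesis .
qed

lemma expectation_weight_run_le:
  assumes "finite S" "far_apart E S"
  shows "(\<integral>\<^sup>+s. weight E k S s \<partial>run V E k) \<le> weight E 0 S (V, \<lambda>_. 1/4)"
proof (induction k)
  case (Suc k)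
  have "(\<integral>\<^sup>+s. weight E (Suc k) S s \<partial>run V E (Suc k)) =
      (\<integral>\<^sup>+s. (\<integral>\<^sup>+s'. weight E (Suc k) S s' \<partial>phase E s) \<partial>run V E k)"
    by (simp add: nn_integral_bind_pmf)
  also have "\<dots> \<le> (\<integral>\<^sup>+s. weight E k S s \<partial>run V E k)"
  proof (intro nn_integral_mono_AE AE_pmfI)
    fix s assume s: "s \<in> set_pmf (run V E k)"
    have valid: "valid_state V s" by (rule valid_state_run[OF s])
    then have "finite (fst s)"
      using finite_vertices[OF graph] by (auto simp: valid_state_def intro: finite_subset)
    then have "(\<integral>\<^sup>+s'. weight E (Suc k) S s' \<partial>phase E s) =
        measure_pmf.expectation (phase E s) (weight E (Suc k) S)"
      by (intro nn_integral_eq_integral integrable_measure_pmf_finite finite_set_pmf_phase)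
        (auto simp: weight_nonneg)
    also have "\<dots> \<le> weight E k S s"
      by (intro ennreal_leI expectation_weight_phase_le[OF valid assms])
    finally show "(\<integral>\<^sup>+s'. weight E (Suc k) S s' \<partial>phase E s) \<le> weight E k S s" .
  qed
  finally show ?case using Suc.IH by (rule order.trans)
qed (simp add: weight_nonneg)

lemma weight_initial_le:
  assumes S: "S \<subseteq> V" and D: "1 \<le> max_degree V E"
  shows "weight E 0 S (V, \<lambda>_. 1/4) \<le> (((real (max_degree V E) / 4) ^ 4) powr theta) ^ card S"
proof -
  let ?s0 = "(V, \<lambda>_. 1/4 :: real)"
  have "potential E 0 ?s0 v \<le> (real (max_degree V E) / 4) ^ 4" for v
  proof -
    have "card (nbrs E v \<inter> V) \<le> max_degree V E"
      using card_mono[OF finite_nbrs[OF graph, of v], of "nbrs E v \<inter> V"] card_nbrs_le_max_degree[OF graph, of v]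
      by simp
    then have "eff_deg_floor E ?s0 v \<le> real (max_degree V E) / 4"
      using D by (simp add: eff_deg_floor_def eff_deg_def)
    then show ?thesis
      unfolding potential_def by (simp add: power_mono eff_deg_floor_def)
  qed
  moreover have "0 \<le> potential E 0 ?s0 v" for v
  proof (rule potential_nonneg)
    show "dyadic (snd ?s0 u)" for u unfolding dyadic_def by (intro exI[of _ 2]) simp
  qed
  ultimately have "(\<Prod>v\<in>S. if v \<in> V then potential E 0 ?s0 v powr theta else 0)
      \<le> (\<Prod>v\<in>S. ((real (max_degree V E) / 4) ^ 4) powr theta)"
    by (intro prod_mono) (auto intro: powr_mono2 simp: theta_def)
  then show ?thesis by (simp add: weight_def)
qed

text \<open>Markov's inequality for the weight, whose expectation does not increase along the run.\<close>
lemma prob_far_set_undecided_le: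
  assumes S: "S \<subseteq> V" "far_apart E S" and D: "1 \<le> max_degree V E"
  shows "measure_pmf.prob (run V E T) {s. S \<subseteq> fst s} \<le>
     ((((real (max_degree V E) / 4) ^ 4) powr theta) / ((2 ^ T / 256) powr theta)) ^ card S"
proof -
  define a where "a = ((real (max_degree V E) / 4) ^ 4) powr theta"
  define b where "b = ((2::real) ^ T / 256) powr theta"
  let ?A = "{s. S \<subseteq> fst s}"
  have fS: "finite S" using S(1) finite_vertices[OF graph] by (rule finite_subset)
  have "b > 0" by (simp add: b_def)
  have "ennreal (b ^ card S) * emeasure (run V E T) ?A = (\<integral>\<^sup>+s. ennreal (b ^ card S) * indicator ?A s \<partial>run V E T)"
    by (simp add: nn_integral_cmult_indicator)
  also have "\<dots> \<le> (\<integral>\<^sup>+s. weight E T S s \<partial>run V E T)"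
  proof (intro nn_integral_mono_AE AE_pmfI)
    fix s assume "s \<in> set_pmf (run V E T)"
    then have dy: "\<And>u. dyadic (snd s u)" using valid_state_run[of s V E T] by (simp add: valid_state_def)
    show "ennreal (b ^ card S) * indicator ?A s \<le> ennreal (weight E T S s)"
    proof (cases "s \<in> ?A")
      case True
      then show ?thesis unfolding b_def using weight_ge_if_undecided[OF dy] by (simp add: ennreal_leI)
    qed simp
  qed
  also have "\<dots> \<le> weight E 0 S (V, \<lambda>_. 1/4)" by (rule expectation_weight_run_le[OF fS S(2)])
  also have "\<dots> \<le> a ^ card S" unfolding a_def by (intro ennreal_leI weight_initial_le S(1) D)
  finally have "b ^ card S * measure_pmf.prob (run V E T) ?A \<le> a ^ card S"
    using \<open>b > 0\<close> by (simp add: measure_pmf.emeasure_eq_measure ennreal_mult[symmetric] a_def)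
  then show ?thesis
    using \<open>b > 0\<close> by (simp add: a_def b_def power_divide field_simps mult.commute)
qed

end

lemma ratio_powr_theta_le:
  fixes d :: real and T :: nat
  assumes d: "2 \<le> d" and T: "70000 * ln d \<le> real T"
  shows "(((d / 4) ^ 4) powr theta) / ((2 ^ T / 256) powr theta) \<le> 1 / d ^ 13"
proof -
  define x where "x = d ^ 4 / 2 ^ T"
  have "x > 0" "d > 0" "ln d \<ge> 0" using d by (simp_all add: x_def)
  have "(((d / 4) ^ 4) powr theta) / ((2 ^ T / 256) powr theta) = x powr theta"
    unfolding x_def by (simp add: powr_divide[symmetric] power_divide field_simps)
  also have "\<dots> = exp (theta * (4 * ln d - real T * ln 2))"
    using \<open>x > 0\<close> \<open>d > 0\<close> by (simp add: powr_def x_def ln_div ln_realpow mult.commute)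
  also have "\<dots> \<le> exp (- 13 * ln d)"
    using T ln2_ge_two_thirds \<open>ln d \<ge> 0\<close> mult_mono[OF T ln2_ge_two_thirds]
    by (auto simp: theta_def)
  also have "\<dots> = 1 / d ^ 13"
  proof -
    have "exp (13 * ln d) = d ^ 13"
      using \<open>d > 0\<close> exp_ln[of "d ^ 13"] ln_realpow[of d 13] by simp
    then show ?thesis by (simp add: exp_minus inverse_eq_divide)
  qed
  finally show ?thesis .
qed

section \<open>Far-apart sets and the union bound\<close>

lemma ball2_self: "v \<in> ball2 E v"
  by (simp add: ball2_def)

lemma ball2_sym: "y \<in> ball2 E w \<Longrightarrow> w \<in> ball2 E y"
  unfolding ball2_def by (auto simp: nbrs_sym)

definition ball2_overlapping :: "'a set set \<Rightarrow> 'a \<Rightarrow> 'a set" where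
  "ball2_overlapping E u = (\<Union>x\<in>ball2 E u. ball2 E x)"

lemma self_in_ball2_overlapping: "u \<in> ball2_overlapping E u"
  unfolding ball2_overlapping_def by (rule UN_I[of u "ball2 E u" u "ball2 E", OF ball2_self ball2_self])

lemma ball2_disjoint_if_not_overlapping:
  "w \<notin> ball2_overlapping E u \<Longrightarrow> ball2 E w \<inter> ball2 E u = {}"
proof (rule ccontr)
  assume "w \<notin> ball2_overlapping E u" "ball2 E w \<inter> ball2 E u \<noteq> {}"
  then obtain y where "w \<in> ball2 E y" "y \<in> ball2 E u" "w \<notin> (\<Union>x\<in>ball2 E u. ball2 E x)"
    unfolding ball2_overlapping_def by (blast dest: ball2_sym)
  then show False by blast
qed

lemma far_apart_subset: "far_apart E S \<Longrightarrow> S' \<subseteq> S \<Longrightarrow> far_apart E S'"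
  unfolding far_apart_def by blast

lemma far_apart_insert:
  "far_apart E S \<Longrightarrow> (\<And>w. w \<in> S \<Longrightarrow> ball2 E w \<inter> ball2 E u = {}) \<Longrightarrow> far_apart E (insert u S)"
  unfolding far_apart_def by (metis Int_commute insert_iff)

lemma self_power_le_fact: "real s ^ s \<le> 3 ^ s * fact s"
proof -
  have "real s ^ s / fact s \<le> exp (real s)"
    using sum_le_suminf[of "\<lambda>n. real s ^ n /\<^sub>R fact n" "{s}"] exp_converges[of "real s"]
    by (auto simp: sums_iff divide_inverse mult.commute)
  also have "\<dots> = exp 1 ^ s" by (simp add: exp_of_nat_mult[symmetric])
  also have "\<dots> \<le> 3 ^ s" by (intro power_mono exp_le) auto
  finally show ?thesis by (simp add: divide_le_eq mult.commute)
qed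

lemma power_five_mult_decay_le_one:
  fixes d :: real
  assumes d: "2 \<le> d" and s: "1 \<le> s"
  shows "d ^ 5 * real s * (3 / d ^ 8) ^ s \<le> 1"
proof -
  have "d > 0" using d by simp
  have "d ^ 5 * d ^ (3 * s) \<le> d ^ (8 * s)"
    using d s by (simp add: power_add[symmetric] power_increasing)
  then have "d ^ 5 * (3 / d ^ 8) ^ s \<le> (3 / d ^ 3) ^ s"
    using \<open>d > 0\<close> by (simp add: power_divide field_simps flip: power_mult)
  also have "\<dots> \<le> (1/2) ^ s"
  proof -
    have "(2::real) ^ 3 \<le> d ^ 3" using d by (intro power_mono) auto
    then show ?thesis using \<open>d > 0\<close> by (intro power_mono) (auto simp: field_simps)
  qed
  finally have "d ^ 5 * real s * (3 / d ^ 8) ^ s \<le> real s * (1/2) ^ s"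
    by (simp add: mult_left_mono mult_ac)
  also have "\<dots> \<le> 1"
  proof -
    have "real s \<le> 2 ^ s"
      using less_exp[of s] by (metis less_imp_le of_nat_less_iff of_nat_numeral of_nat_power)
    then show ?thesis by (simp add: power_one_over field_simps)
  qed
  finally show ?thesis .
qed

lemma binomial_union_bound:
  fixes d q :: real and n s :: nat
  assumes d: "2 \<le> d" and s: "1 \<le> s" and n: "1 \<le> n" and ns: "real n \<le> d ^ 5 * real s"
    and q: "0 \<le> q" "q \<le> 1 / d ^ 13"
  shows "real (n choose s) * q ^ s \<le> 1 / real n"
proof -
  have "d > 0" using d by simp
  have "real (n choose s) * fact s \<le> real n ^ s"
    using of_nat_mono[OF binomial_fact_pow[of n s], where 'a = real] by simp
  then have "real (n choose s) * q ^ s \<le> real n ^ s / fact s * (1 / d ^ 13) ^ s"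
    using q by (intro mult_mono power_mono) (auto simp: le_divide_eq)
  also have "\<dots> \<le> (d ^ 5 * real s) ^ s / fact s * (1 / d ^ 13) ^ s"
    using ns \<open>d > 0\<close> by (intro mult_right_mono divide_right_mono power_mono) auto
  also have "\<dots> = (real s ^ s / fact s) * (1 / d ^ 8) ^ s"
    using \<open>d > 0\<close> by (simp add: power_mult_distrib field_simps flip: power_add power_mult)
  also have "\<dots> \<le> 3 ^ s * (1 / d ^ 8) ^ s"
    using self_power_le_fact[of s] by (intro mult_right_mono) (auto simp: divide_le_eq)
  also have "\<dots> \<le> 1 / real n"
  proof -
    have "real n * (3 / d ^ 8) ^ s \<le> d ^ 5 * real s * (3 / d ^ 8) ^ s"
      using ns by (intro mult_right_mono) auto
    also have "\<dots> \<le> 1" by (rule power_five_mult_decay_le_one[OF d s])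
    finally show ?thesis using n by (simp add: le_divide_eq power_divide mult.commute)
  qed
  finally show ?thesis .
qed

context
  fixes V :: "'a set" and E :: "'a set set"
  assumes graph: "simple_graph V E"
begin

lemma card_ball2_le:
  assumes "1 \<le> max_degree V E"
  shows "finite (ball2 E v)" "card (ball2 E v) \<le> 3 * max_degree V E ^ 2"
proof -
  let ?D = "max_degree V E" and ?N = "nbrs E v"
  have "finite ?N" by (rule finite_nbrs[OF graph])
  then show "finite (ball2 E v)" unfolding ball2_def using finite_nbrs[OF graph] by auto
  have "card (\<Union>u\<in>?N. nbrs E u) \<le> (\<Sum>u\<in>?N. card (nbrs E u))"
    by (rule card_UN_le[OF finite_nbrs[OF graph]])
  also have "\<dots> \<le> card ?N * ?D"
    using sum_bounded_above[of ?N "\<lambda>u. card (nbrs E u)" ?D] card_nbrs_le_max_degree[OF graph] by simp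
  also have "\<dots> \<le> ?D * ?D" using card_nbrs_le_max_degree[OF graph] by (rule mult_right_mono) simp
  finally have "card (\<Union>u\<in>?N. nbrs E u) \<le> ?D * ?D" .
  moreover have "card (ball2 E v) \<le> Suc (card (?N \<union> (\<Union>u\<in>?N. nbrs E u)))"
    unfolding ball2_def by (rule card_insert_le_m1) auto
  moreover have "card (?N \<union> (\<Union>u\<in>?N. nbrs E u)) \<le> card ?N + card (\<Union>u\<in>?N. nbrs E u)"
    by (rule card_Un_le)
  moreover have "card ?N \<le> ?D" "1 \<le> ?D * ?D" "?D \<le> ?D * ?D"
    using card_nbrs_le_max_degree[OF graph] assms by (simp_all add: le_square)
  ultimately show "card (ball2 E v) \<le> 3 * ?D ^ 2" unfolding power2_eq_square by linarith
qed

lemma card_ball2_overlapping_le: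
  assumes "1 \<le> max_degree V E"
  shows "finite (ball2_overlapping E u)" "card (ball2_overlapping E u) \<le> 9 * max_degree V E ^ 4"
proof -
  let ?b = "3 * max_degree V E ^ 2"
  show "finite (ball2_overlapping E u)"
    unfolding ball2_overlapping_def using card_ball2_le(1)[OF assms] by auto
  have "card (ball2_overlapping E u) \<le> (\<Sum>x\<in>ball2 E u. card (ball2 E x))"
    unfolding ball2_overlapping_def by (rule card_UN_le[OF card_ball2_le(1)[OF assms]])
  also have "\<dots> \<le> card (ball2 E u) * ?b"
    using sum_bounded_above[of "ball2 E u" "\<lambda>x. card (ball2 E x)" ?b] card_ball2_le(2)[OF assms] by simp
  also have "\<dots> \<le> ?b * ?b" using card_ball2_le(2)[OF assms] by (intro mult_right_mono) auto
  finally show "card (ball2_overlapping E u) \<le> 9 * max_degree V E ^ 4"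
    by (simp add: power2_eq_square power4_eq_xxxx mult_ac)
qed

lemma exists_far_apart_subset:
  assumes "1 \<le> max_degree V E" and "finite A"
  shows "\<exists>S\<subseteq>A. far_apart E S \<and> card A \<le> card S * (9 * max_degree V E ^ 4)"
  using assms(2)
proof (induction "card A" arbitrary: A rule: less_induct)
  case less
  let ?b = "9 * max_degree V E ^ 4"
  show ?case
  proof (cases "A = {}")
    case True
    then show ?thesis by (intro exI[of _ "{}"]) (auto simp: far_apart_def)
  next
    case False
    then obtain u where u: "u \<in> A" by auto
    let ?A' = "A - ball2_overlapping E u"
    have "card ?A' < card A"
      using u self_in_ball2_overlapping[of u E] less.prems by (intro psubset_card_mono) auto
    then obtain S' where S': "S' \<subseteq> ?A'" "far_apart E S'" "card ?A' \<le> card S' * ?b"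
      using less.hyps less.prems by (meson finite_Diff)
    have far: "far_apart E (insert u S')"
      using S'(1) by (intro far_apart_insert[OF S'(2)] ball2_disjoint_if_not_overlapping) auto
    have "u \<notin> S'" "finite S'"
      using S'(1) self_in_ball2_overlapping[of u E] less.prems by (auto intro: finite_subset)
    have "card A \<le> card (?A' \<union> ball2_overlapping E u)"
      using less.prems card_ball2_overlapping_le(1)[OF assms(1)] by (intro card_mono) auto
    also have "\<dots> \<le> card ?A' + card (ball2_overlapping E u)" by (rule card_Un_le)
    also have "\<dots> \<le> card S' * ?b + ?b" using S'(3) card_ball2_overlapping_le(2)[OF assms(1), of u] by simp
    also have "\<dots> = card (insert u S') * ?b" using \<open>u \<notin> S'\<close> \<open>finite S'\<close> by simp
    finally show ?thesis using far S'(1) u by (intro exI[of _ "insert u S'"]) auto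
  qed
qed

lemma undecided_edges_le:
  assumes fU: "finite (fst s)"
  shows "undecided_edges E s \<le> card (fst s) * max_degree V E"
proof -
  let ?U = "fst s"
  have "{e \<in> E. e \<inter> ?U \<noteq> {}} \<subseteq> (\<Union>v\<in>?U. (\<lambda>u. {u, v}) ` nbrs E v)"
  proof
    fix e assume e: "e \<in> {e \<in> E. e \<inter> ?U \<noteq> {}}"
    then have "card e = 2" using graph by (auto simp: simple_graph_def)
    then obtain x y where xy: "e = {x, y}" by (auto simp: card_2_iff)
    then have "y \<in> nbrs E x" "x \<in> nbrs E y" using e by (auto simp: nbrs_def insert_commute)
    then show "e \<in> (\<Union>v\<in>?U. (\<lambda>u. {u, v}) ` nbrs E v)" using e xy by (auto simp: insert_commute)
  qed
  then have "undecided_edges E s \<le> card (\<Union>v\<in>?U. (\<lambda>u. {u, v}) ` nbrs E v)"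
    unfolding undecided_edges_def using fU finite_nbrs[OF graph] by (intro card_mono) auto
  also have "\<dots> \<le> (\<Sum>v\<in>?U. card ((\<lambda>u. {u, v}) ` nbrs E v))" by (rule card_UN_le[OF fU])
  also have "\<dots> \<le> (\<Sum>v\<in>?U. max_degree V E)"
  proof (rule sum_mono)
    fix v
    show "card ((\<lambda>u. {u, v}) ` nbrs E v) \<le> max_degree V E"
      using card_image_le[OF finite_nbrs[OF graph], of "\<lambda>u. {u, v}" v]
        card_nbrs_le_max_degree[OF graph, of v] by linarith
  qed
  finally show ?thesis by simp
qed

lemma undecided_edges_run_le:
  assumes "s \<in> set_pmf (run V E k)"
  shows "undecided_edges E s \<le> card V * max_degree V E"
proof -
  have U: "fst s \<subseteq> V" using valid_state_run[OF assms] by (simp add: valid_state_def)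
  then have "finite (fst s)" using finite_vertices[OF graph] by (rule finite_subset)
  then have "undecided_edges E s \<le> card (fst s) * max_degree V E" by (rule undecided_edges_le)
  also have "\<dots> \<le> card V * max_degree V E"
    using U finite_vertices[OF graph] by (intro mult_right_mono card_mono) auto
  finally show ?thesis .
qed

lemma exists_far_apart_undecided_subset:
  assumes U: "fst s \<subseteq> V" and D: "2 \<le> max_degree V E"
    and many: "9 * real (card V) < real (undecided_edges E s)"
  shows "\<exists>S\<subseteq>fst s. far_apart E S \<and> card S = nat \<lceil>real (card V) / real (max_degree V E) ^ 5\<rceil>"
proof -
  let ?D = "max_degree V E"
  have fU: "finite (fst s)" using U finite_vertices[OF graph] by (rule finite_subset)
  obtain S0 where S0: "S0 \<subseteq> fst s" "far_apart E S0" "card (fst s) \<le> card S0 * (9 * ?D ^ 4)"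
    using exists_far_apart_subset[OF _ fU] D by auto
  have "9 * real (card V) < real (card (fst s) * ?D)"
    using many undecided_edges_le[OF fU] by (meson of_nat_le_iff order_less_le_trans)
  also have "\<dots> \<le> real (card S0 * (9 * ?D ^ 4) * ?D)"
    using S0(3) by (intro of_nat_mono mult_right_mono) auto
  finally have "real (card V) / real ?D ^ 5 \<le> real (card S0)"
    using D by (simp add: divide_le_eq power_Suc[symmetric] mult_ac eval_nat_numeral)
  then obtain S where "S \<subseteq> S0" "card S = nat \<lceil>real (card V) / real ?D ^ 5\<rceil>"
    by (meson obtain_subset_with_card_n nat_ceiling_le_eq)
  then show ?thesis using S0 far_apart_subset by blast
qed

lemma prob_some_far_set_undecided_le:
  assumes D: "2 \<le> max_degree V E" and T: "70000 * ln (real (max_degree V E)) \<le> real T"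
  shows "measure_pmf.prob (run V E T) (\<Union>S\<in>{S. S \<subseteq> V \<and> card S = k \<and> far_apart E S}. {s. S \<subseteq> fst s})
           \<le> real (card V choose k) * (1 / real (max_degree V E) ^ 13) ^ k"
proof -
  let ?D = "max_degree V E" and ?M = "run V E T"
  let ?F = "{S. S \<subseteq> V \<and> card S = k \<and> far_apart E S}"
  have "measure_pmf.prob ?M (\<Union>S\<in>?F. {s. S \<subseteq> fst s}) \<le> (\<Sum>S\<in>?F. measure_pmf.prob ?M {s. S \<subseteq> fst s})"
    using finite_vertices[OF graph]
    by (intro measure_pmf.finite_measure_subadditive_finite) (auto intro: finite_subset[of _ "Pow V"])
  also have "\<dots> \<le> (\<Sum>S\<in>?F. (1 / real ?D ^ 13) ^ k)"
  proof (rule sum_mono)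
    fix S assume "S \<in> ?F"
    then have "measure_pmf.prob ?M {s. S \<subseteq> fst s} \<le>
        ((((real ?D / 4) ^ 4) powr theta) / ((2 ^ T / 256) powr theta)) ^ k"
      using prob_far_set_undecided_le[OF graph, of S T] D by simp
    also have "\<dots> \<le> (1 / real ?D ^ 13) ^ k"
      using ratio_powr_theta_le[OF _ T] D by (intro power_mono) auto
    finally show "measure_pmf.prob ?M {s. S \<subseteq> fst s} \<le> (1 / real ?D ^ 13) ^ k" .
  qed
  also have "\<dots> \<le> real (card V choose k) * (1 / real ?D ^ 13) ^ k"
  proof -
    have "card ?F \<le> card {S. S \<subseteq> V \<and> card S = k}"
      using finite_vertices[OF graph] by (intro card_mono) auto
    also have "\<dots> = card V choose k" by (rule n_subsets[OF finite_vertices[OF graph]])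
    finally show ?thesis by (simp add: mult_right_mono)
  qed
  finally show ?thesis .
qed

lemma prob_many_undecided_edges_le:
  assumes ne: "V \<noteq> {}" and T: "70000 * ln (real (max_degree V E)) \<le> real T"
  shows "measure_pmf.prob (run V E T) {s. 9 * real (card V) < real (undecided_edges E s)}
           \<le> 1 / real (card V)"
proof -
  let ?D = "max_degree V E" and ?n = "card V" and ?M = "run V E T"
  let ?Bad = "{s. 9 * real ?n < real (undecided_edges E s)}"
  have n: "1 \<le> ?n" using ne finite_vertices[OF graph] by (simp add: Suc_le_eq card_gt_0_iff)
  show ?thesis
  proof (cases "?D \<le> 1")
    case True
    have "undecided_edges E s \<le> ?n" if "s \<in> set_pmf ?M" for s
      using undecided_edges_run_le[OF that] mult_le_mono2[OF True, of ?n] by linarith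
    then have "?Bad \<inter> set_pmf ?M = {}" by fastforce
    then show ?thesis using measure_Int_set_pmf[of ?M ?Bad] by simp
  next
    case False
    then have D: "2 \<le> ?D" "(2::real) \<le> real ?D" by auto
    define k where "k = nat \<lceil>real ?n / real ?D ^ 5\<rceil>"
    let ?F = "{S. S \<subseteq> V \<and> card S = k \<and> far_apart E S}"
    have "?Bad \<inter> set_pmf ?M \<subseteq> (\<Union>S\<in>?F. {s. S \<subseteq> fst s})"
    proof
      fix s assume s: "s \<in> ?Bad \<inter> set_pmf ?M"
      then have "fst s \<subseteq> V" using valid_state_run[of s V E T] by (simp add: valid_state_def)
      then obtain S where "S \<subseteq> fst s" "far_apart E S" "card S = k"
        using exists_far_apart_undecided_subset[OF _ D(1)] s unfolding k_def by blast
      then show "s \<in> (\<Union>S\<in>?F. {s. S \<subseteq> fst s})" using \<open>fst s \<subseteq> V\<close> by auto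
    qed
    then have "measure_pmf.prob ?M ?Bad \<le> measure_pmf.prob ?M (\<Union>S\<in>?F. {s. S \<subseteq> fst s})"
      by (subst measure_Int_set_pmf[symmetric]) (rule measure_pmf.finite_measure_mono, auto)
    also have "\<dots> \<le> real (?n choose k) * (1 / real ?D ^ 13) ^ k"
      by (rule prob_some_far_set_undecided_le[OF D(1) T])
    also have "\<dots> \<le> 1 / real ?n"
    proof (rule binomial_union_bound[OF D(2) _ n _ _ order.refl])
      have "0 < \<lceil>real ?n / real ?D ^ 5\<rceil>" using n D by simp
      then show "1 \<le> k" unfolding k_def by linarith
      have "real ?n / real ?D ^ 5 \<le> real k" unfolding k_def by (rule real_nat_ceiling_ge)
      then show "real ?n \<le> real ?D ^ 5 * real k" using D by (simp add: divide_le_eq mult.commute)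
    qed simp
    finally show ?thesis .
  qed
qed

end

theorem corollary1:
  shows "\<exists>c::real. \<exists>C::real. \<forall>(V::nat set) (E::nat set set).
     simple_graph V E \<and> V \<noteq> {} \<longrightarrow>
     measure_pmf.prob (run V E (nat \<lceil>c * ln (real (max_degree V E))\<rceil>))
        {s. real (undecided_edges E s) \<le> C * real (card V)}
       \<ge> 1 - 1 / real (card V)"
proof (intro exI allI impI)
  fix V :: "nat set" and E :: "nat set set"
  assume "simple_graph V E \<and> V \<noteq> {}"
  then have "simple_graph V E" "V \<noteq> {}" by auto
  let ?M = "run V E (nat \<lceil>70000 * ln (real (max_degree V E))\<rceil>)"
  have "measure_pmf.prob ?M {s. 9 * real (card V) < real (undecided_edges E s)} \<le> 1 / real (card V)"
    by (intro prob_many_undecided_edges_le[OF \<open>simple_graph V E\<close> \<open>V \<noteq> {}\<close>] real_nat_ceiling_ge)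
  moreover have "measure_pmf.prob ?M {s. real (undecided_edges E s) \<le> 9 * real (card V)} =
      1 - measure_pmf.prob ?M {s. 9 * real (card V) < real (undecided_edges E s)}"
    using measure_pmf.prob_compl[of "{s. 9 * real (card V) < real (undecided_edges E s)}" ?M]
    by (simp add: set_diff_eq not_less)
  ultimately show "measure_pmf.prob ?M {s. real (undecided_edges E s) \<le> 9 * real (card V)}
      \<ge> 1 - 1 / real (card V)" by linarith
qed

end
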